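(* Let $K$ be a field, $b\ge2$ an integer, and $M=(m_{i,j})_{i,j\ge0}$ a non-degenerate $b$-autosimilar infinite matrix over $K$. Set $d_0=1$ and $d_k=\det(M(k+1))/\det(M(k))$ for $k=1,\dots,b-1$. Then for every $n\ge1$, $$\det(M(n))=\prod_{k=0}^{n-1}\ \prod_i d_{\kappa_i},$$ where $k=\sum_i\kappa_ib^i$ is the base-$b$ expansion of $k$ (digits $\kappa_i\in\{0,\dots,b-1\}$).
   Context: An infinite matrix $M=(m_{i,j})_{i,j\ge0}$ is $b$-autosimilar if $m_{0,0}=1$ and $m_{s,t}=\prod_i m_{\sigma_i,\tau_i}$ whenever $s=\sum_i\sigma_ib^i$, $t=\sum_i\tau_ib^i$ are base-$b$ expansions. $M(n)$ denotes the submatrix $(m_{i,j})_{0\le i,j<n}$. $M$ is non-degenerate if $\det(M(n))\neq0$ for $n=2,\dots,b$. *)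

theory Defs
  imports "Jordan_Normal_Form.Determinant"
begin

definition digit :: "nat \<Rightarrow> nat \<Rightarrow> nat \<Rightarrow> nat" where
  "digit b i s = s div b ^ i mod b"

text \<open>The product over all digit positions is taken over
  i < Suc (max s t); all digits at positions >= Suc (max s t) are 0 (as b >= 2),
  and m 0 0 = 1, so this equals the full (finitely supported) product.\<close>
definition autosimilar :: "nat \<Rightarrow> (nat \<Rightarrow> nat \<Rightarrow> 'a::comm_ring_1) \<Rightarrow> bool" where
  "autosimilar b m \<longleftrightarrow> m 0 0 = 1 \<and>
     (\<forall>s t. m s t = (\<Prod>i<Suc (max s t). m (digit b i s) (digit b i t)))"

definition submat :: "(nat \<Rightarrow> nat \<Rightarrow> 'a) \<Rightarrow> nat \<Rightarrow> 'a mat" where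
  "submat m n = mat n n (\<lambda>(i, j). m i j)"

definition nondegenerate :: "nat \<Rightarrow> (nat \<Rightarrow> nat \<Rightarrow> 'a::comm_ring_1) \<Rightarrow> bool" where
  "nondegenerate b m \<longleftrightarrow> (\<forall>n\<in>{2..b}. det (submat m n) \<noteq> 0)"

definition dquot :: "(nat \<Rightarrow> nat \<Rightarrow> 'a::field) \<Rightarrow> nat \<Rightarrow> 'a" where
  "dquot m k = (if k = 0 then 1 else det (submat m (k + 1)) / det (submat m k))"

end

theory Submission
  imports Defs
begin

(* The b x b block M(b) has nonzero leading minors, so Gaussian elimination factors it as
   L D U with L unit lower triangular, U unit upper triangular and D = diag(d_0, ..., d_(b-1)).
   Taking digit-wise products, the autosimilar extensions L', U' of L, U and the diagonal
   D'_k = prod_i d_(kappa_i) factor the whole matrix: M = L' D' U'. Since s < p forces some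
   digit of s below the corresponding digit of p, L' and U' are again unit triangular, hence
   det M(n) = prod_(k<n) D'_k. *)

definition unit_lower_triangular :: "(nat \<Rightarrow> nat \<Rightarrow> 'a::comm_ring_1) \<Rightarrow> bool" where
  "unit_lower_triangular L \<longleftrightarrow> (\<forall>i. L i i = 1) \<and> (\<forall>i j. i < j \<longrightarrow> L i j = 0)"

definition unit_upper_triangular :: "(nat \<Rightarrow> nat \<Rightarrow> 'a::comm_ring_1) \<Rightarrow> bool" where
  "unit_upper_triangular U \<longleftrightarrow> unit_lower_triangular (\<lambda>i j. U j i)"

lemma det_submat_LDU:
  fixes M L U :: "nat \<Rightarrow> nat \<Rightarrow> 'a::comm_ring_1" and D :: "nat \<Rightarrow> 'a"
  assumes L: "unit_lower_triangular L" and U: "unit_upper_triangular U"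
    and M: "\<And>i j. i < n \<Longrightarrow> j < n \<Longrightarrow> M i j = (\<Sum>p<n. L i p * D p * U p j)"
  shows "det (submat M n) = (\<Prod>p<n. D p)"
proof -
  define DU where "DU = (\<lambda>p j. D p * U p j)"
  have factor: "submat M n = submat L n * submat DU n"
    by (rule eq_matI)
      (auto simp: submat_def scalar_prod_def DU_def M atLeast0LessThan mult.assoc)
  have "det (submat L n) = 1"
    using L by (subst det_lower_triangular[of n])
      (auto simp: submat_def unit_lower_triangular_def prod_list_diag_prod)
  moreover have "det (submat DU n) = (\<Prod>p<n. D p)"
    using U by (subst det_upper_triangular[of _ n])
      (auto simp: submat_def upper_triangular_def unit_upper_triangular_def
        unit_lower_triangular_def DU_def prod_list_diag_prod atLeast0LessThan)
  ultimately show ?thesis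
    unfolding factor by (subst det_mult[of _ n]) (auto simp: submat_def)
qed

(* The (i, j) entry after the first min i j steps of Gaussian elimination without pivoting;
   its diagonal entries are the pivots. *)
function elim_entry :: "(nat \<Rightarrow> nat \<Rightarrow> 'a::field) \<Rightarrow> nat \<Rightarrow> nat \<Rightarrow> 'a" where
  "elim_entry A i j = A i j - (\<Sum>p<min i j. elim_entry A i p * elim_entry A p j / elim_entry A p p)"
  by auto
termination
  by (relation "measure (\<lambda>(A, i, j). i + j)") auto

declare elim_entry.simps[simp del]

abbreviation pivot :: "(nat \<Rightarrow> nat \<Rightarrow> 'a::field) \<Rightarrow> nat \<Rightarrow> 'a" where
  "pivot A p \<equiv> elim_entry A p p"

definition elim_lower :: "(nat \<Rightarrow> nat \<Rightarrow> 'a::field) \<Rightarrow> nat \<Rightarrow> nat \<Rightarrow> 'a" where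
  "elim_lower A i p = (if p < i then elim_entry A i p / pivot A p else if p = i then 1 else 0)"

definition elim_upper :: "(nat \<Rightarrow> nat \<Rightarrow> 'a::field) \<Rightarrow> nat \<Rightarrow> nat \<Rightarrow> 'a" where
  "elim_upper A p j = (if p < j then elim_entry A p j / pivot A p else if p = j then 1 else 0)"

lemma unit_lower_triangular_elim_lower: "unit_lower_triangular (elim_lower A)"
  by (simp add: unit_lower_triangular_def elim_lower_def)

lemma unit_upper_triangular_elim_upper: "unit_upper_triangular (elim_upper A)"
  by (simp add: unit_upper_triangular_def unit_lower_triangular_def elim_upper_def)

lemma elim_entry_LDU:
  fixes A :: "nat \<Rightarrow> nat \<Rightarrow> 'a::field"
  assumes pivots: "\<And>p. p < n - 1 \<Longrightarrow> pivot A p \<noteq> 0" and i: "i < n" and j: "j < n"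
  shows "A i j = (\<Sum>p<n. elim_lower A i p * pivot A p * elim_upper A p j)"
proof -
  let ?k = "min i j"
  have "(\<Sum>p<?k. elim_lower A i p * pivot A p * elim_upper A p j)
      = (\<Sum>p<?k. elim_entry A i p * elim_entry A p j / pivot A p)"
    using pivots i j by (intro sum.cong) (auto simp: elim_lower_def elim_upper_def)
  moreover have "elim_lower A i ?k * pivot A ?k * elim_upper A ?k j = elim_entry A i j"
    using pivots[of ?k] i j
    by (cases i j rule: linorder_cases) (auto simp: elim_lower_def elim_upper_def min_def)
  ultimately have "A i j = (\<Sum>p<Suc ?k. elim_lower A i p * pivot A p * elim_upper A p j)"
    using elim_entry.simps[of A i j] by simp
  also have "\<dots> = (\<Sum>p<n. elim_lower A i p * pivot A p * elim_upper A p j)"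
    using i j by (intro sum.mono_neutral_left) (auto simp: elim_lower_def elim_upper_def)
  finally show ?thesis .
qed

lemma det_submat_eq_prod_pivots:
  fixes A :: "nat \<Rightarrow> nat \<Rightarrow> 'a::field"
  assumes "\<And>p. p < n - 1 \<Longrightarrow> pivot A p \<noteq> 0"
  shows "det (submat A n) = (\<Prod>p<n. pivot A p)"
  using assms by (intro det_submat_LDU[OF unit_lower_triangular_elim_lower[of A]
      unit_upper_triangular_elim_upper[of A]] elim_entry_LDU)

lemma pivot_nonzero:
  fixes A :: "nat \<Rightarrow> nat \<Rightarrow> 'a::field"
  assumes minors: "\<And>k. 1 \<le> k \<Longrightarrow> k \<le> N \<Longrightarrow> det (submat A k) \<noteq> 0"
  shows "p < N \<Longrightarrow> pivot A p \<noteq> 0"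
proof (induction p rule: less_induct)
  case (less p)
  then have "(\<Prod>q<Suc p. pivot A q) \<noteq> 0"
    using minors[of "Suc p"] det_submat_eq_prod_pivots[of "Suc p" A] by simp
  then show ?case by simp
qed

lemma pivot_eq_minor_quotient:
  fixes A :: "nat \<Rightarrow> nat \<Rightarrow> 'a::field"
  assumes minors: "\<And>k. 1 \<le> k \<Longrightarrow> k \<le> N \<Longrightarrow> det (submat A k) \<noteq> 0"
    and k: "0 < k" "k < N"
  shows "pivot A k = det (submat A (Suc k)) / det (submat A k)"
proof -
  have "\<And>p. p < Suc k \<Longrightarrow> pivot A p \<noteq> 0"
    using pivot_nonzero[OF minors] k by auto
  then have "det (submat A (Suc k)) = pivot A k * det (submat A k)"
    using k by (simp add: det_submat_eq_prod_pivots)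
  moreover have "det (submat A k) \<noteq> 0"
    using minors k by simp
  ultimately show ?thesis by simp
qed

lemma leading_minors_LDU:
  fixes A :: "nat \<Rightarrow> nat \<Rightarrow> 'a::field"
  assumes minors: "\<And>k. 1 \<le> k \<Longrightarrow> k \<le> N \<Longrightarrow> det (submat A k) \<noteq> 0"
  obtains L U D where "unit_lower_triangular L" "unit_upper_triangular U"
    and "\<And>i j. i < N \<Longrightarrow> j < N \<Longrightarrow> A i j = (\<Sum>p<N. L i p * D p * U p j)"
    and "D 0 = A 0 0"
    and "\<And>k. 0 < k \<Longrightarrow> k < N \<Longrightarrow> D k = det (submat A (Suc k)) / det (submat A k)"
proof
  show "A i j = (\<Sum>p<N. elim_lower A i p * pivot A p * elim_upper A p j)"
    if "i < N" "j < N" for i j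
    using that pivot_nonzero[OF minors] by (intro elim_entry_LDU) auto
qed (auto simp: unit_lower_triangular_elim_lower unit_upper_triangular_elim_upper
    pivot_eq_minor_quotient[OF minors] elim_entry.simps[of A 0 0])

lemma digit_less_base: "0 < b \<Longrightarrow> digit b i s < b"
  by (simp add: digit_def)

lemma digit_eq_0_if_less_power: "s < b ^ i \<Longrightarrow> digit b i s = 0"
  by (simp add: digit_def)

lemma digit_Suc: "digit b (Suc i) s = digit b i (s div b)"
  by (simp add: digit_def div_mult2_eq mult.commute)

lemma less_power_base: "2 \<le> b \<Longrightarrow> (n::nat) < b ^ n"
  by (meson less_exp order_less_le_trans power_mono zero_le_numeral)

lemma digit_nonzero_imp_less: "2 \<le> b \<Longrightarrow> digit b i s \<noteq> 0 \<Longrightarrow> i < s"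
  using less_power_base[of b i] digit_eq_0_if_less_power[of s b i] by linarith

lemma exists_digit_less:
  assumes b: "2 \<le> b"
  shows "s < p \<Longrightarrow> \<exists>i. digit b i s < digit b i p"
proof (induction p arbitrary: s rule: less_induct)
  case (less p)
  consider "s mod b < p mod b" | "s div b < p div b"
    | "p mod b \<le> s mod b" "p div b \<le> s div b" by linarith
  then show ?case
  proof cases
    case 1
    then show ?thesis by (metis digit_def div_by_1 power_0)
  next
    case 2
    moreover have "p div b < p" using b less.prems by (intro div_less_dividend) auto
    ultimately show ?thesis by (metis less.IH digit_Suc)
  next
    case 3
    then have "b * (p div b) + p mod b \<le> b * (s div b) + s mod b"
      by (intro add_mono mult_left_mono) auto
    then show ?thesis using less.prems by simp
  qed
qed

lemma sum_lessThan_mult: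
  fixes f :: "nat \<Rightarrow> 'a::comm_monoid_add"
  shows "(\<Sum>p<b * K. f p) = (\<Sum>q<K. \<Sum>c<b. f (c + b * q))"
proof -
  have "(\<Sum>c<b. f (c + b * q)) = (\<Sum>p\<in>{q * b..<q * b + b}. f p)" for q
    using sum.shift_bounds_nat_ivl[of f 0 "q * b" b]
    by (simp add: lessThan_atLeast0 add.commute mult.commute)
  then show ?thesis
    by (simp add: sum.nat_group mult.commute)
qed

lemma sum_prod_digits:
  fixes f :: "nat \<Rightarrow> nat \<Rightarrow> 'a::comm_semiring_1"
  shows "(\<Sum>p<b ^ N. \<Prod>i<N. f i (digit b i p)) = (\<Prod>i<N. \<Sum>c<b. f i c)"
proof (induction N arbitrary: f)
  case 0
  then show ?case by simp
next
  case (Suc N)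
  have digits: "digit b 0 (c + b * q) = c" "digit b (Suc i) (c + b * q) = digit b i q"
    if "c < b" for c q i
    using that by (simp add: digit_def, simp add: digit_Suc)
  have "(\<Sum>p<b ^ Suc N. \<Prod>i<Suc N. f i (digit b i p))
      = (\<Sum>q<b ^ N. \<Sum>c<b. f 0 c * (\<Prod>i<N. f (Suc i) (digit b i q)))"
    unfolding power_Suc sum_lessThan_mult
    by (intro sum.cong refl) (simp only: prod.lessThan_Suc_shift digits lessThan_iff)
  also have "\<dots> = (\<Sum>c<b. f 0 c) * (\<Sum>q<b ^ N. \<Prod>i<N. f (Suc i) (digit b i q))"
    by (simp add: sum_distrib_left sum_distrib_right sum.swap[of _ "{..<b}"])
  also have "\<dots> = (\<Prod>i<Suc N. \<Sum>c<b. f i c)"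
    by (simp only: Suc[of "\<lambda>i. f (Suc i)"] prod.lessThan_Suc_shift)
  finally show ?case .
qed

definition autosimilar_ext :: "nat \<Rightarrow> (nat \<Rightarrow> nat \<Rightarrow> 'a::comm_monoid_mult) \<Rightarrow> nat \<Rightarrow> nat \<Rightarrow> 'a" where
  "autosimilar_ext b g s t = (\<Prod>i<Suc (max s t). g (digit b i s) (digit b i t))"

lemma autosimilar_iff: "autosimilar b m \<longleftrightarrow> m 0 0 = 1 \<and> autosimilar_ext b m = m"
  unfolding autosimilar_def autosimilar_ext_def fun_eq_iff by metis

lemma autosimilar_ext_eq_prod:
  fixes g :: "nat \<Rightarrow> nat \<Rightarrow> 'a::comm_monoid_mult"
  assumes b: "2 \<le> b" and g: "g 0 0 = 1" and s: "s < b ^ N" and t: "t < b ^ N"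
  shows "autosimilar_ext b g s t = (\<Prod>i<N. g (digit b i s) (digit b i t))"
proof -
  have extend: "(\<Prod>i<K'. g (digit b i s) (digit b i t)) = (\<Prod>i<K. g (digit b i s) (digit b i t))"
    if "s < b ^ K" "t < b ^ K" "K \<le> K'" for K K'
  proof (rule prod.mono_neutral_right)
    show "\<forall>i\<in>{..<K'} - {..<K}. g (digit b i s) (digit b i t) = 1"
    proof
      fix i assume "i \<in> {..<K'} - {..<K}"
      then have "b ^ K \<le> b ^ i" using b by (intro power_increasing) auto
      then have "s < b ^ i" "t < b ^ i" using that by linarith+
      then show "g (digit b i s) (digit b i t) = 1"
        using g by (simp add: digit_eq_0_if_less_power)
    qed
  qed (use that in auto)
  let ?N0 = "Suc (max s t)"
  have "s < b ^ ?N0" "t < b ^ ?N0"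
    using less_power_base[OF b, of ?N0] max.cobounded1[of s t] max.cobounded2[of t s] by linarith+
  then have "autosimilar_ext b g s t = (\<Prod>i<max N ?N0. g (digit b i s) (digit b i t))"
    unfolding autosimilar_ext_def by (intro extend[symmetric]) auto
  also have "\<dots> = (\<Prod>i<N. g (digit b i s) (digit b i t))"
    using s t by (intro extend) auto
  finally show ?thesis .
qed

lemma unit_lower_triangular_autosimilar_ext:
  assumes b: "2 \<le> b" and l: "unit_lower_triangular l"
  shows "unit_lower_triangular (autosimilar_ext b l)"
  unfolding unit_lower_triangular_def
proof (intro conjI allI impI)
  show "autosimilar_ext b l s s = 1" for s
    using l by (simp add: autosimilar_ext_def unit_lower_triangular_def)
  show "autosimilar_ext b l s p = 0" if "s < p" for s p
  proof -
    obtain i where i: "digit b i s < digit b i p"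
      using exists_digit_less[OF b \<open>s < p\<close>] by blast
    then have "i < Suc (max s p)"
      using digit_nonzero_imp_less[OF b, of i p] by simp
    moreover have "l (digit b i s) (digit b i p) = 0"
      using i l by (simp add: unit_lower_triangular_def)
    ultimately show ?thesis
      unfolding autosimilar_ext_def by (intro prod_zero) auto
  qed
qed

lemma unit_upper_triangular_autosimilar_ext:
  assumes "2 \<le> b" and "unit_upper_triangular u"
  shows "unit_upper_triangular (autosimilar_ext b u)"
proof -
  have "(\<lambda>s t. autosimilar_ext b u t s) = autosimilar_ext b (\<lambda>s t. u t s)"
    by (simp add: fun_eq_iff autosimilar_ext_def max.commute)
  moreover have "unit_lower_triangular (autosimilar_ext b (\<lambda>s t. u t s))"
    using assms by (intro unit_lower_triangular_autosimilar_ext) (simp_all add: unit_upper_triangular_def)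
  ultimately show ?thesis
    by (simp add: unit_upper_triangular_def)
qed

lemma autosimilar_ext_LDU:
  fixes g l u :: "nat \<Rightarrow> nat \<Rightarrow> 'a::comm_ring_1" and D :: "nat \<Rightarrow> 'a"
  assumes b: "2 \<le> b" and l: "unit_lower_triangular l" and u: "unit_upper_triangular u"
    and D0: "D 0 = 1" and g0: "g 0 0 = 1"
    and block: "\<And>c d. c < b \<Longrightarrow> d < b \<Longrightarrow> g c d = (\<Sum>p<b. l c p * D p * u p d)"
    and s: "s < n" and t: "t < n"
  shows "autosimilar_ext b g s t
    = (\<Sum>p<n. autosimilar_ext b l s p * (\<Prod>i<Suc p. D (digit b i p)) * autosimilar_ext b u p t)"
proof -
  have n: "n < b ^ n" using less_power_base[OF b] .
  have l0: "l 0 0 = 1" and u0: "u 0 0 = 1"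
    using l u by (simp_all add: unit_lower_triangular_def unit_upper_triangular_def)
  have factors: "(\<Prod>i<n. l (digit b i s) (digit b i p) * D (digit b i p) * u (digit b i p) (digit b i t))
      = autosimilar_ext b l s p * (\<Prod>i<Suc p. D (digit b i p)) * autosimilar_ext b u p t"
    if "p < b ^ n" for p
  proof -
    have "(\<Prod>i<n. l (digit b i s) (digit b i p)) = autosimilar_ext b l s p"
      using autosimilar_ext_eq_prod[OF b, of l s n p] l0 s n that by simp
    moreover have "(\<Prod>i<n. D (digit b i p)) = (\<Prod>i<Suc p. D (digit b i p))"
      using autosimilar_ext_eq_prod[OF b, of "\<lambda>c _. D c" p n p] D0 that
      by (simp add: autosimilar_ext_def)
    moreover have "(\<Prod>i<n. u (digit b i p) (digit b i t)) = autosimilar_ext b u p t"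
      using autosimilar_ext_eq_prod[OF b, of u p n t] u0 t n that by simp
    ultimately show ?thesis
      by (simp add: prod.distrib)
  qed
  have "autosimilar_ext b g s t = (\<Prod>i<n. g (digit b i s) (digit b i t))"
    using s t n g0 by (intro autosimilar_ext_eq_prod[OF b]) auto
  also have "\<dots> = (\<Prod>i<n. \<Sum>c<b. l (digit b i s) c * D c * u c (digit b i t))"
    using b by (intro prod.cong refl block digit_less_base) auto
  also have "\<dots> = (\<Sum>p<b ^ n. \<Prod>i<n.
      l (digit b i s) (digit b i p) * D (digit b i p) * u (digit b i p) (digit b i t))"
    by (rule sum_prod_digits[symmetric])
  also have "\<dots> = (\<Sum>p<b ^ n.
      autosimilar_ext b l s p * (\<Prod>i<Suc p. D (digit b i p)) * autosimilar_ext b u p t)"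
    by (intro sum.cong refl factors) simp
  also have "\<dots> = (\<Sum>p<n.
      autosimilar_ext b l s p * (\<Prod>i<Suc p. D (digit b i p)) * autosimilar_ext b u p t)"
    using s n unit_lower_triangular_autosimilar_ext[OF b l]
    by (intro sum.mono_neutral_right) (auto simp: unit_lower_triangular_def)
  finally show ?thesis .
qed

lemma det_submat_autosimilar:
  fixes m l u :: "nat \<Rightarrow> nat \<Rightarrow> 'a::comm_ring_1" and D :: "nat \<Rightarrow> 'a"
  assumes b: "2 \<le> b" and m: "autosimilar b m"
    and l: "unit_lower_triangular l" and u: "unit_upper_triangular u" and D0: "D 0 = 1"
    and block: "\<And>c d. c < b \<Longrightarrow> d < b \<Longrightarrow> m c d = (\<Sum>p<b. l c p * D p * u p d)"
  shows "det (submat m n) = (\<Prod>p<n. \<Prod>i<Suc p. D (digit b i p))"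
proof (rule det_submat_LDU[OF unit_lower_triangular_autosimilar_ext[OF b l]
      unit_upper_triangular_autosimilar_ext[OF b u]])
  fix s t assume "s < n" "t < n"
  then show "m s t = (\<Sum>p<n. autosimilar_ext b l s p * (\<Prod>i<Suc p. D (digit b i p))
      * autosimilar_ext b u p t)"
    using autosimilar_ext_LDU[OF b l u D0 _ block] m by (simp add: autosimilar_iff)
qed

theorem corollary2p2:
  fixes m :: "nat \<Rightarrow> nat \<Rightarrow> 'a::field" and b n :: nat
  assumes "b \<ge> 2" and "autosimilar b m" and "nondegenerate b m" and "n \<ge> 1"
  shows "det (submat m n) = (\<Prod>k<n. \<Prod>i<Suc k. dquot m (digit b i k))"
proof -
  have m00: "m 0 0 = 1"
    using assms(2) by (simp add: autosimilar_iff)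
  have minors: "det (submat m k) \<noteq> 0" if "1 \<le> k" "k \<le> b" for k
  proof (cases "k = 1")
    case True
    then show ?thesis using m00 det_single[of "submat m 1"] by (simp add: submat_def)
  qed (use assms(3) that in \<open>auto simp: nondegenerate_def\<close>)
  obtain L U D where LDU: "unit_lower_triangular L" "unit_upper_triangular U"
      "\<And>c d. c < b \<Longrightarrow> d < b \<Longrightarrow> m c d = (\<Sum>p<b. L c p * D p * U p d)"
    and D0: "D 0 = m 0 0"
    and D: "\<And>k. 0 < k \<Longrightarrow> k < b \<Longrightarrow> D k = det (submat m (Suc k)) / det (submat m k)"
    using leading_minors_LDU[OF minors] by blast
  have "det (submat m n) = (\<Prod>k<n. \<Prod>i<Suc k. D (digit b i k))"
    using assms(1,2) LDU D0 m00 by (intro det_submat_autosimilar) auto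
  also have "\<dots> = (\<Prod>k<n. \<Prod>i<Suc k. dquot m (digit b i k))"
    using assms(1) D D0 m00 digit_less_base
    by (intro prod.cong refl) (simp add: dquot_def)
  finally show ?thesis .
qed

end
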